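(* Let $f:\mathbb{R}\to\mathbb{R}$ satisfy $f(0)=0$ and $|f(u)-f(v)|\leq C|u-v|(e^{\lambda u^2}+e^{\lambda v^2})$ for all $u,v\in\mathbb{R}$, for some constants $C,\lambda>0$. Let $T>0$ and $u\in C([0,T];\exp L^2_0(\mathbb{R}^N))$. Then for every $2\leq p<\infty$, $f(u)\in C([0,T];L^p(\mathbb{R}^N))$.
   Context: The Orlicz space $\exp L^2(\mathbb{R}^N)$ is the set of $u\in L^1_{loc}(\mathbb{R}^N)$ such that $\int_{\mathbb{R}^N}(e^{|u(x)|^2/\alpha^2}-1)\,dx<\infty$ for some $\alpha>0$, with the Luxemburg norm $\|u\|_{\exp L^2}=\inf\{\alpha>0:\int_{\mathbb{R}^N}(e^{|u(x)|^2/\alpha^2}-1)\,dx\leq 1\}$. $\exp L^2_0(\mathbb{R}^N)$ is the closure of $C_0^\infty(\mathbb{R}^N)$ in this norm, equivalently the set of $u\in L^1_{loc}$ with $\int(e^{|u|^2/\alpha^2}-1)\,dx<\infty$ for every $\alpha>0$, equipped with the same norm. *)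

theory Defs
  imports "HOL-Analysis.Analysis"
begin

text \<open>Functions on R^N are modelled as functions on a Euclidean space type 'a,
  with Lebesgue measure.\<close>

definition loc_integrable :: "('a::euclidean_space \<Rightarrow> real) \<Rightarrow> bool" where
  "loc_integrable u \<longleftrightarrow> u \<in> borel_measurable lebesgue \<and>
     (\<forall>K. compact K \<longrightarrow> set_integrable lebesgue K u)"

definition orlicz_exp2_int :: "real \<Rightarrow> ('a::euclidean_space \<Rightarrow> real) \<Rightarrow> ennreal" where
  "orlicz_exp2_int \<alpha> u = (\<integral>\<^sup>+ x. ennreal (exp (\<bar>u x\<bar>^2 / \<alpha>^2) - 1) \<partial>lebesgue)"

definition expL2 :: "('a::euclidean_space \<Rightarrow> real) set" where
  "expL2 = {u. loc_integrable u \<and> (\<exists>\<alpha>>0. orlicz_exp2_int \<alpha> u < \<infinity>)}"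

definition expL2_0 :: "('a::euclidean_space \<Rightarrow> real) set" where
  "expL2_0 = {u. loc_integrable u \<and> (\<forall>\<alpha>>0. orlicz_exp2_int \<alpha> u < \<infinity>)}"

definition expL2_norm :: "('a::euclidean_space \<Rightarrow> real) \<Rightarrow> real" where
  "expL2_norm u = Inf {\<alpha>. \<alpha> > 0 \<and> orlicz_exp2_int \<alpha> u \<le> 1}"

definition Lp_space :: "real \<Rightarrow> ('a::euclidean_space \<Rightarrow> real) set" where
  "Lp_space p = {g. g \<in> borel_measurable lebesgue \<and>
      (\<integral>\<^sup>+ x. ennreal (\<bar>g x\<bar> powr p) \<partial>lebesgue) < \<infinity>}"

definition Lp_norm :: "real \<Rightarrow> ('a::euclidean_space \<Rightarrow> real) \<Rightarrow> real" where
  "Lp_norm p g = enn2real (\<integral>\<^sup>+ x. ennreal (\<bar>g x\<bar> powr p) \<partial>lebesgue) powr (1 / p)"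

definition cont_expL2_0 :: "real \<Rightarrow> (real \<Rightarrow> 'a::euclidean_space \<Rightarrow> real) \<Rightarrow> bool" where
  "cont_expL2_0 T u \<longleftrightarrow> (\<forall>t\<in>{0..T}. u t \<in> expL2_0) \<and>
     (\<forall>t\<in>{0..T}. ((\<lambda>s. expL2_norm (\<lambda>x. u s x - u t x)) \<longlongrightarrow> 0) (at t within {0..T}))"

definition cont_Lp :: "real \<Rightarrow> real \<Rightarrow> (real \<Rightarrow> 'a::euclidean_space \<Rightarrow> real) \<Rightarrow> bool" where
  "cont_Lp p T v \<longleftrightarrow> (\<forall>t\<in>{0..T}. v t \<in> Lp_space p) \<and>
     (\<forall>t\<in>{0..T}. ((\<lambda>s. Lp_norm p (\<lambda>x. v s x - v t x)) \<longlongrightarrow> 0) (at t within {0..T}))"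

end

theory Submission
  imports Defs
begin

text \<open>
  Put \<open>d = u s - u t\<close>. The growth condition gives
  \<open>\<bar>f (u s) - f (u t)\<bar> \<le> 2 C \<bar>d\<bar> exp (2 \<lambda> d\<^sup>2) exp (2 \<lambda> (u t)\<^sup>2)\<close>.
  Raising this to the power \<open>p\<close> and splitting the product by Young's inequality
  \<open>X exp a \<le> X + X\<^sup>2 / (2 \<epsilon>\<^sup>p) + \<epsilon>\<^sup>p (exp (2 a) - 1) / 2\<close> leaves terms
  \<open>\<bar>d\<bar>\<^sup>q exp (\<kappa> d\<^sup>2)\<close> with \<open>q = p, 2 p\<close> and the exponential Orlicz integrand of \<open>u t\<close>.
  Since \<open>\<bar>y\<bar>\<^sup>q exp (\<kappa> y\<^sup>2) \<le> K \<epsilon>\<^sup>q (exp (y\<^sup>2 / \<epsilon>\<^sup>2) - 1)\<close> whenever \<open>\<kappa> \<epsilon>\<^sup>2 \<le> 1/2\<close>, the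
  former are at most \<open>\<epsilon>\<^sup>p\<close> times the Orlicz integral of \<open>d\<close> at level \<open>\<epsilon>\<close>, which is at most
  \<open>1\<close> once the Luxemburg norm of \<open>d\<close> is below \<open>\<epsilon>\<close>; the latter is finite because
  \<open>u t\<close> has finite Orlicz integral at every level. Hence \<open>\<parallel>f (u s) - f (u t)\<parallel>\<^sub>p = O(\<epsilon>)\<close>.
\<close>

lemma power_div_fact_le_exp_minus_one:
  fixes x :: real
  assumes "x \<ge> 0" "k \<ge> 1"
  shows "x ^ k / fact k \<le> exp x - 1"
proof -
  have s: "(\<lambda>n. x ^ n / fact n) sums exp x"
    using exp_converges[of x] by (simp add: divide_inverse mult.commute)
  have "(\<Sum>n\<in>{0,k}. x ^ n / fact n) \<le> exp x"
    using sum_le_suminf[OF sums_summable[OF s], of "{0,k}"] sums_unique[OF s] assms by auto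
  then show ?thesis using assms by simp
qed

lemma powr_le_exp_sq_minus_one:
  fixes q c :: real
  assumes "q \<ge> 2" "c > 0"
  obtains K where "K > 0" "\<And>z::real. \<bar>z\<bar> powr q \<le> K * (exp (c * z\<^sup>2) - 1)"
proof
  define k where "k = nat \<lceil>q / 2\<rceil>"
  have k: "k \<ge> 1" "q \<le> 2 * real k"
    using assms(1) unfolding k_def by linarith+
  show "1 / c + fact k / c ^ k > 0"
    using assms(2) by (simp add: add_pos_pos)
  fix z :: real
  have "\<bar>z\<bar> powr q \<le> z\<^sup>2 + (z\<^sup>2) ^ k"
  proof (cases "\<bar>z\<bar> \<le> 1")
    case True
    then have "\<bar>z\<bar> powr q \<le> \<bar>z\<bar> powr 2"
      using assms(1) by (intro powr_mono') auto
    also have "\<dots> \<le> z\<^sup>2"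
      by (cases "z = 0") (auto simp: powr_realpow[of "\<bar>z\<bar>" 2, simplified])
    finally show ?thesis
      by (simp add: add_increasing2)
  next
    case False
    then have "\<bar>z\<bar> powr q \<le> \<bar>z\<bar> powr (real (2 * k))"
      using k by (intro powr_mono) auto
    also have "\<dots> = (z\<^sup>2) ^ k"
      using False by (simp add: powr_realpow power_mult del: of_nat_mult)
    finally show ?thesis
      by (simp add: add_increasing)
  qed
  also have "\<dots> = (c * z\<^sup>2) / c + (c * z\<^sup>2) ^ k / c ^ k"
    using assms(2) by (simp add: power_mult_distrib)
  also have "\<dots> \<le> (exp (c * z\<^sup>2) - 1) / c + fact k * (exp (c * z\<^sup>2) - 1) / c ^ k"
    using power_div_fact_le_exp_minus_one[of "c * z\<^sup>2" k] k(1) assms(2)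
      power_div_fact_le_exp_minus_one[of "c * z\<^sup>2" 1]
    by (intro add_mono divide_right_mono) (auto simp: pos_divide_le_eq mult.commute)
  also have "\<dots> = (1 / c + fact k / c ^ k) * (exp (c * z\<^sup>2) - 1)"
    by (simp add: field_simps)
  finally show "\<bar>z\<bar> powr q \<le> (1 / c + fact k / c ^ k) * (exp (c * z\<^sup>2) - 1)" .
qed

lemma powr_mult_exp_le_orlicz_kernel:
  fixes q :: real
  assumes "q \<ge> 2"
  obtains K where "K > 0"
    "\<And>\<epsilon> \<kappa> y::real. 0 < \<epsilon> \<Longrightarrow> 0 \<le> \<kappa> \<Longrightarrow> \<kappa> * \<epsilon>\<^sup>2 \<le> 1/2 \<Longrightarrow>
       \<bar>y\<bar> powr q * exp (\<kappa> * y\<^sup>2) \<le> K * \<epsilon> powr q * (exp (y\<^sup>2 / \<epsilon>\<^sup>2) - 1)"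
proof -
  obtain K where K: "K > 0" "\<And>z::real. \<bar>z\<bar> powr q \<le> K * (exp (1/2 * z\<^sup>2) - 1)"
    using powr_le_exp_sq_minus_one[OF assms, of "1/2"] by auto
  have "\<bar>y\<bar> powr q * exp (\<kappa> * y\<^sup>2) \<le> K * \<epsilon> powr q * (exp (y\<^sup>2 / \<epsilon>\<^sup>2) - 1)"
    if "0 < \<epsilon>" "0 \<le> \<kappa>" "\<kappa> * \<epsilon>\<^sup>2 \<le> 1/2" for \<epsilon> \<kappa> y :: real
  proof -
    define z where "z = y / \<epsilon>"
    have y: "y = \<epsilon> * z" and z2: "y\<^sup>2 / \<epsilon>\<^sup>2 = z\<^sup>2"
      using that(1) by (simp_all add: z_def power_divide)
    have "\<kappa> * y\<^sup>2 = (\<kappa> * \<epsilon>\<^sup>2) * z\<^sup>2"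
      by (simp add: y power_mult_distrib)
    also have "\<dots> \<le> 1/2 * z\<^sup>2"
      using that(3) by (intro mult_right_mono) auto
    finally have exp_le: "exp (\<kappa> * y\<^sup>2) \<le> exp (1/2 * z\<^sup>2)"
      by simp
    have "\<bar>y\<bar> powr q = \<epsilon> powr q * \<bar>z\<bar> powr q"
      using that(1) by (simp add: y abs_mult powr_mult)
    then have "\<bar>y\<bar> powr q * exp (\<kappa> * y\<^sup>2) \<le> \<epsilon> powr q * \<bar>z\<bar> powr q * exp (1/2 * z\<^sup>2)"
      using exp_le by (simp add: mult_left_mono)
    also have "\<dots> \<le> \<epsilon> powr q * (K * (exp (1/2 * z\<^sup>2) - 1)) * exp (1/2 * z\<^sup>2)"
      by (intro mult_right_mono mult_left_mono K(2)) auto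
    also have "\<dots> = K * \<epsilon> powr q * (exp (z\<^sup>2) - exp (1/2 * z\<^sup>2))"
      by (simp add: algebra_simps flip: exp_add)
    also have "\<dots> \<le> K * \<epsilon> powr q * (exp (z\<^sup>2) - 1)"
      using K(1) by (intro mult_left_mono) auto
    finally show ?thesis
      by (simp only: z2)
  qed
  with K(1) that show thesis
    by blast
qed

lemma mult_exp_le_young:
  fixes X s t :: real
  assumes "s > 0" "t \<ge> 0"
  shows "X * exp t \<le> X + X\<^sup>2 / (2 * s) + s / 2 * (exp (2 * t) - 1)"
proof -
  define Y where "Y = exp t - 1"
  have "X * Y \<le> X\<^sup>2 / (2 * s) + s / 2 * Y\<^sup>2"
  proof -
    have "0 \<le> (X - s * Y)\<^sup>2 / (2 * s)"
      using assms by simp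
    also have "\<dots> = X\<^sup>2 / (2 * s) + s / 2 * Y\<^sup>2 - X * Y"
      using assms by (simp add: field_simps power2_eq_square)
    finally show ?thesis by simp
  qed
  moreover have "s / 2 * Y\<^sup>2 \<le> s / 2 * (exp (2 * t) - 1)"
  proof -
    have "Y\<^sup>2 = exp (2 * t) - 1 - 2 * Y"
      by (simp add: Y_def power2_eq_square algebra_simps flip: exp_add)
    moreover have "Y \<ge> 0"
      using assms(2) by (simp add: Y_def)
    ultimately show ?thesis
      using assms(1) by (intro mult_left_mono) auto
  qed
  moreover have "X * exp t = X + X * Y"
    by (simp add: Y_def algebra_simps)
  ultimately show ?thesis
    by linarith
qed

lemma orlicz_exp2_int_antimono:
  assumes "0 < \<alpha>" "\<alpha> \<le> \<beta>"
  shows "orlicz_exp2_int \<beta> u \<le> orlicz_exp2_int \<alpha> u"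
  unfolding orlicz_exp2_int_def
proof (intro nn_integral_mono ennreal_leI)
  fix x
  have "\<bar>u x\<bar>\<^sup>2 / \<beta>\<^sup>2 \<le> \<bar>u x\<bar>\<^sup>2 / \<alpha>\<^sup>2"
    using assms by (intro divide_left_mono power_mono) auto
  then show "exp (\<bar>u x\<bar>\<^sup>2 / \<beta>\<^sup>2) - 1 \<le> exp (\<bar>u x\<bar>\<^sup>2 / \<alpha>\<^sup>2) - 1"
    by simp
qed

lemma orlicz_exp2_int_diff_le:
  fixes a b :: "'a::euclidean_space \<Rightarrow> real"
  assumes a: "a \<in> borel_measurable lebesgue" and b: "b \<in> borel_measurable lebesgue"
    and "0 < \<alpha>"
  shows "orlicz_exp2_int \<alpha> (\<lambda>x. a x - b x) \<le> orlicz_exp2_int (\<alpha> / 2) a + orlicz_exp2_int (\<alpha> / 2) b"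
proof -
  define E where "E c x = ennreal (exp (\<bar>c x\<bar>\<^sup>2 / (\<alpha> / 2)\<^sup>2) - 1)" for c :: "'a \<Rightarrow> real" and x
  have "orlicz_exp2_int \<alpha> (\<lambda>x. a x - b x) \<le> (\<integral>\<^sup>+x. E a x + E b x \<partial>lebesgue)"
    unfolding orlicz_exp2_int_def
  proof (intro nn_integral_mono)
    fix x
    define c where "c = (if \<bar>a x\<bar> \<le> \<bar>b x\<bar> then b x else a x)"
    have "\<bar>a x - b x\<bar>\<^sup>2 \<le> (2 * \<bar>c\<bar>)\<^sup>2"
      unfolding c_def by (intro power_mono) auto
    then have "\<bar>a x - b x\<bar>\<^sup>2 / \<alpha>\<^sup>2 \<le> \<bar>c\<bar>\<^sup>2 / (\<alpha> / 2)\<^sup>2"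
      using assms(3) by (simp add: power_divide field_simps)
    then have "exp (\<bar>a x - b x\<bar>\<^sup>2 / \<alpha>\<^sup>2) - 1 \<le> exp (\<bar>c\<bar>\<^sup>2 / (\<alpha> / 2)\<^sup>2) - 1"
      by simp
    moreover have "1 \<le> exp (\<bar>a x\<bar>\<^sup>2 / (\<alpha> / 2)\<^sup>2)" "1 \<le> exp (\<bar>b x\<bar>\<^sup>2 / (\<alpha> / 2)\<^sup>2)"
      by simp_all
    ultimately have "exp (\<bar>a x - b x\<bar>\<^sup>2 / \<alpha>\<^sup>2) - 1
        \<le> (exp (\<bar>a x\<bar>\<^sup>2 / (\<alpha> / 2)\<^sup>2) - 1) + (exp (\<bar>b x\<bar>\<^sup>2 / (\<alpha> / 2)\<^sup>2) - 1)"
      unfolding c_def by (split if_split_asm) linarith+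
    then show "ennreal (exp (\<bar>a x - b x\<bar>\<^sup>2 / \<alpha>\<^sup>2) - 1) \<le> E a x + E b x"
      unfolding E_def by (simp add: ennreal_plus[symmetric] ennreal_leI del: ennreal_plus)
  qed
  also have "\<dots> = orlicz_exp2_int (\<alpha> / 2) a + orlicz_exp2_int (\<alpha> / 2) b"
  proof -
    have "E a \<in> borel_measurable lebesgue" "E b \<in> borel_measurable lebesgue"
      unfolding E_def using a b by measurable
    then show ?thesis
      unfolding orlicz_exp2_int_def E_def[abs_def] by (rule nn_integral_add)
  qed
  finally show ?thesis .
qed

lemma orlicz_exp2_int_le_scaled:
  fixes v :: "'a::euclidean_space \<Rightarrow> real"
  assumes v: "v \<in> borel_measurable lebesgue" and "1 \<le> \<alpha>"
  shows "orlicz_exp2_int \<alpha> v \<le> ennreal (1 / \<alpha>\<^sup>2) * orlicz_exp2_int 1 v"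
proof -
  have "orlicz_exp2_int \<alpha> v
      \<le> (\<integral>\<^sup>+x. ennreal (1 / \<alpha>\<^sup>2) * ennreal (exp (\<bar>v x\<bar>\<^sup>2 / 1\<^sup>2) - 1) \<partial>lebesgue)"
    unfolding orlicz_exp2_int_def
  proof (intro nn_integral_mono)
    fix x
    define t where "t = 1 / \<alpha>\<^sup>2"
    have t: "0 \<le> t" "t \<le> 1"
      using assms(2) by (auto simp: t_def field_simps)
    have "exp ((1 - t) *\<^sub>R 0 + t *\<^sub>R \<bar>v x\<bar>\<^sup>2) \<le> (1 - t) * exp 0 + t * exp (\<bar>v x\<bar>\<^sup>2)"
      by (rule convex_onD[OF exp_convex t]) auto
    then have "exp (\<bar>v x\<bar>\<^sup>2 / \<alpha>\<^sup>2) - 1 \<le> t * (exp (\<bar>v x\<bar>\<^sup>2) - 1)"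
      by (simp add: t_def algebra_simps)
    then show "ennreal (exp (\<bar>v x\<bar>\<^sup>2 / \<alpha>\<^sup>2) - 1)
        \<le> ennreal (1 / \<alpha>\<^sup>2) * ennreal (exp (\<bar>v x\<bar>\<^sup>2 / 1\<^sup>2) - 1)"
      by (simp add: t_def ennreal_mult[symmetric] ennreal_leI)
  qed
  also have "\<dots> = ennreal (1 / \<alpha>\<^sup>2) * orlicz_exp2_int 1 v"
    unfolding orlicz_exp2_int_def using v by (intro nn_integral_cmult) (measurable, auto)
  finally show ?thesis .
qed

lemma orlicz_exp2_int_le_one_if_norm_less:
  fixes v :: "'a::euclidean_space \<Rightarrow> real"
  assumes v: "v \<in> borel_measurable lebesgue" and fin: "orlicz_exp2_int 1 v < \<infinity>"
    and less: "expL2_norm v < \<epsilon>"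
  shows "orlicz_exp2_int \<epsilon> v \<le> 1"
proof -
  define S where "S = {\<alpha>. \<alpha> > 0 \<and> orlicz_exp2_int \<alpha> v \<le> 1}"
  define R where "R = enn2real (orlicz_exp2_int 1 v)"
  have R: "orlicz_exp2_int 1 v = ennreal R" "R \<ge> 0"
    using fin by (auto simp: R_def ennreal_enn2real_if)
  \<comment> \<open>\<open>expL2_norm\<close> is an infimum over \<open>S\<close>, which says nothing unless \<open>S \<noteq> {}\<close>\<close>
  define \<alpha> where "\<alpha> = sqrt R + 1"
  have \<alpha>: "1 \<le> \<alpha>" "R \<le> \<alpha>\<^sup>2"
    using R(2) by (simp_all add: \<alpha>_def power2_sum)
  have "orlicz_exp2_int \<alpha> v \<le> ennreal (1 / \<alpha>\<^sup>2) * ennreal R"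
    using orlicz_exp2_int_le_scaled[OF v \<alpha>(1)] R(1) by simp
  also have "\<dots> = ennreal (R / \<alpha>\<^sup>2)"
    using R(2) by (simp add: ennreal_mult[symmetric])
  also have "\<dots> \<le> 1"
    using \<alpha> by (simp add: divide_le_eq_1)
  finally have "\<alpha> \<in> S"
    using \<alpha>(1) by (simp add: S_def)
  then obtain \<beta> where "\<beta> \<in> S" "\<beta> < \<epsilon>"
    using cInf_lessD[of S \<epsilon>] less unfolding expL2_norm_def S_def by blast
  then show ?thesis
    using orlicz_exp2_int_antimono[of \<beta> \<epsilon> v] unfolding S_def by auto
qed

lemma Lp_norm_le_if_nn_integral_le:
  assumes "0 < p" "0 \<le> B" "(\<integral>\<^sup>+x. ennreal (\<bar>g x\<bar> powr p) \<partial>lebesgue) \<le> ennreal B"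
  shows "Lp_norm p g \<le> B powr (1 / p)"
  unfolding Lp_norm_def
  using enn2real_mono[OF assms(3)] assms(1,2) by (intro powr_mono2) auto

lemma tendsto_zero_if_eventually_le_scaled:
  fixes g :: "'b \<Rightarrow> real"
  assumes "0 < \<epsilon>\<^sub>0"
    and le: "\<And>\<epsilon>. 0 < \<epsilon> \<Longrightarrow> \<epsilon> \<le> \<epsilon>\<^sub>0 \<Longrightarrow> eventually (\<lambda>s. \<bar>g s\<bar> \<le> D * \<epsilon>) F"
  shows "(g \<longlongrightarrow> 0) F"
proof (rule tendstoI)
  fix \<eta> :: real
  assume "0 < \<eta>"
  define \<epsilon> where "\<epsilon> = min \<epsilon>\<^sub>0 (\<eta> / (2 * (\<bar>D\<bar> + 1)))"
  have \<epsilon>: "0 < \<epsilon>" "\<epsilon> \<le> \<epsilon>\<^sub>0"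
    using \<open>0 < \<eta>\<close> assms(1) by (simp_all add: \<epsilon>_def)
  have "D * \<epsilon> \<le> (\<bar>D\<bar> + 1) * (\<eta> / (2 * (\<bar>D\<bar> + 1)))"
    using \<epsilon> by (intro mult_mono) (auto simp: \<epsilon>_def)
  also have "\<dots> < \<eta>"
    using \<open>0 < \<eta>\<close> by (simp add: field_simps add_pos_nonneg)
  finally show "eventually (\<lambda>s. dist (g s) 0 < \<eta>) F"
    using le[OF \<epsilon>] by (auto elim: eventually_mono)
qed

locale exp_sq_lipschitz =
  fixes f :: "real \<Rightarrow> real" and C lam :: real
  assumes C_nonneg: "0 \<le> C" and lam_pos: "0 < lam"
    and lipschitz: "\<And>v w. \<bar>f v - f w\<bar> \<le> C * \<bar>v - w\<bar> * (exp (lam * v\<^sup>2) + exp (lam * w\<^sup>2))"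
begin

lemma continuous_on: "continuous_on UNIV f"
proof (intro continuous_at_imp_continuous_on ballI)
  fix x
  have "((\<lambda>y. C * \<bar>y - x\<bar> * (exp (lam * y\<^sup>2) + exp (lam * x\<^sup>2))) \<longlongrightarrow> 0) (at x)"
    by (auto intro!: tendsto_eq_intros)
  then have "((\<lambda>y. f y - f x) \<longlongrightarrow> 0) (at x)"
    by (rule Lim_null_comparison[rotated]) (use lipschitz in auto)
  then show "isCont f x"
    unfolding isCont_def by (rule LIM_zero_cancel)
qed

lemma abs_diff_le:
  "\<bar>f a - f b\<bar> \<le> 2 * C * \<bar>a - b\<bar> * exp (2 * lam * (a - b)\<^sup>2) * exp (2 * lam * b\<^sup>2)"
proof -
  have "a\<^sup>2 \<le> 2 * (a - b)\<^sup>2 + 2 * b\<^sup>2"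
    using sum_squares_ge_zero[of "a - 2 * b" 0] by (simp add: power2_eq_square algebra_simps)
  then have "lam * a\<^sup>2 \<le> lam * (2 * (a - b)\<^sup>2 + 2 * b\<^sup>2)"
    using lam_pos by (intro mult_left_mono) auto
  then have "exp (lam * a\<^sup>2) \<le> exp (2 * lam * (a - b)\<^sup>2) * exp (2 * lam * b\<^sup>2)"
    by (simp add: algebra_simps flip: exp_add)
  moreover have "exp (lam * b\<^sup>2) \<le> exp (2 * lam * (a - b)\<^sup>2) * exp (2 * lam * b\<^sup>2)"
    using lam_pos by (simp add: algebra_simps flip: exp_add)
  ultimately have "C * \<bar>a - b\<bar> * (exp (lam * a\<^sup>2) + exp (lam * b\<^sup>2))
      \<le> C * \<bar>a - b\<bar> * (2 * (exp (2 * lam * (a - b)\<^sup>2) * exp (2 * lam * b\<^sup>2)))"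
    using C_nonneg by (intro mult_left_mono) auto
  with lipschitz[of a b] show ?thesis
    by simp
qed

lemma diff_powr_le_orlicz_kernels:
  assumes p: "p \<ge> 2"
  obtains K where "K \<ge> 0"
    "\<And>\<epsilon> a b. 0 < \<epsilon> \<Longrightarrow> 4 * p * lam * \<epsilon>\<^sup>2 \<le> 1/2 \<Longrightarrow>
       \<bar>f a - f b\<bar> powr p
         \<le> K * \<epsilon> powr p * ((exp ((a - b)\<^sup>2 / \<epsilon>\<^sup>2) - 1) + (exp (4 * p * lam * b\<^sup>2) - 1))"
proof -
  obtain K1 where K1: "K1 > 0"
    "\<And>\<epsilon> \<kappa> y::real. 0 < \<epsilon> \<Longrightarrow> 0 \<le> \<kappa> \<Longrightarrow> \<kappa> * \<epsilon>\<^sup>2 \<le> 1/2 \<Longrightarrow>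
       \<bar>y\<bar> powr p * exp (\<kappa> * y\<^sup>2) \<le> K1 * \<epsilon> powr p * (exp (y\<^sup>2 / \<epsilon>\<^sup>2) - 1)"
    using powr_mult_exp_le_orlicz_kernel[OF p] by blast
  obtain K2 where K2: "K2 > 0"
    "\<And>\<epsilon> \<kappa> y::real. 0 < \<epsilon> \<Longrightarrow> 0 \<le> \<kappa> \<Longrightarrow> \<kappa> * \<epsilon>\<^sup>2 \<le> 1/2 \<Longrightarrow>
       \<bar>y\<bar> powr (2 * p) * exp (\<kappa> * y\<^sup>2) \<le> K2 * \<epsilon> powr (2 * p) * (exp (y\<^sup>2 / \<epsilon>\<^sup>2) - 1)"
    using powr_mult_exp_le_orlicz_kernel[of "2 * p"] p by auto
  define K where "K = (2 * C) powr p * (K1 + K2 / 2 + 1 / 2)"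
  have "\<bar>f a - f b\<bar> powr p
      \<le> K * \<epsilon> powr p * ((exp ((a - b)\<^sup>2 / \<epsilon>\<^sup>2) - 1) + (exp (4 * p * lam * b\<^sup>2) - 1))"
    if \<epsilon>: "0 < \<epsilon>" "4 * p * lam * \<epsilon>\<^sup>2 \<le> 1/2" for \<epsilon> a b
  proof -
    define d where "d = a - b"
    define G where "G = exp (d\<^sup>2 / \<epsilon>\<^sup>2) - 1"
    define H where "H = exp (4 * p * lam * b\<^sup>2) - 1"
    define X where "X = \<bar>d\<bar> powr p * exp (2 * p * lam * d\<^sup>2)"
    define s where "s = \<epsilon> powr p"
    have s: "s > 0"
      using \<epsilon>(1) by (simp add: s_def)
    have GH: "G \<ge> 0" "H \<ge> 0"
      using p lam_pos by (simp_all add: G_def H_def)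
    have "\<bar>f a - f b\<bar> powr p \<le> (2 * C * \<bar>d\<bar> * exp (2 * lam * d\<^sup>2) * exp (2 * lam * b\<^sup>2)) powr p"
      using abs_diff_le p by (intro powr_mono2) (auto simp: d_def)
    also have "\<dots> = (2 * C) powr p * (X * exp (2 * p * lam * b\<^sup>2))"
      by (simp add: X_def powr_mult exp_powr_real algebra_simps)
    also have "\<dots> \<le> (2 * C) powr p * (X + X\<^sup>2 / (2 * s) + s / 2 * H)"
      using mult_exp_le_young[OF s, of "2 * p * lam * b\<^sup>2" X] p lam_pos
      by (intro mult_left_mono) (auto simp: H_def algebra_simps)
    also have "\<dots> \<le> (2 * C) powr p * (s * (K1 + K2 / 2 + 1 / 2) * (G + H))"
    proof (intro mult_left_mono)
      have "X \<le> K1 * s * G"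
        unfolding X_def G_def s_def
        using p lam_pos \<epsilon> by (intro K1(2)) (auto simp: algebra_simps)
      moreover have "X\<^sup>2 = \<bar>d\<bar> powr (2 * p) * exp (4 * p * lam * d\<^sup>2)"
        by (simp add: X_def power2_eq_square algebra_simps flip: powr_add exp_add)
      then have "X\<^sup>2 / (2 * s) \<le> K2 * s\<^sup>2 * G / (2 * s)"
        unfolding G_def s_def
        using p lam_pos \<epsilon> K2(2)[of \<epsilon> "4 * p * lam" d]
        by (intro divide_right_mono) (simp_all add: power2_eq_square flip: powr_add)
      moreover have "K1 * s * G + K2 * s\<^sup>2 * G / (2 * s) + s / 2 * H \<le> s * (K1 + K2 / 2 + 1 / 2) * (G + H)"
        using s GH K1(1) K2(1) by (simp add: power2_eq_square field_simps)
      ultimately show "X + X\<^sup>2 / (2 * s) + s / 2 * H \<le> s * (K1 + K2 / 2 + 1 / 2) * (G + H)"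
        by linarith
    qed simp
    finally show ?thesis
      by (simp add: K_def G_def H_def s_def d_def mult_ac)
  qed
  moreover have "K \<ge> 0"
    using K1(1) K2(1) by (simp add: K_def)
  ultimately show thesis
    using that by blast
qed

lemma nn_integral_diff_powr_le:
  assumes p: "p \<ge> 2"
  obtains K where "K \<ge> 0"
    "\<And>\<epsilon> a b :: 'a::euclidean_space \<Rightarrow> real.
       a \<in> borel_measurable lebesgue \<Longrightarrow> b \<in> borel_measurable lebesgue \<Longrightarrow>
       0 < \<epsilon> \<Longrightarrow> 4 * p * lam * \<epsilon>\<^sup>2 \<le> 1/2 \<Longrightarrow>
       (\<integral>\<^sup>+x. ennreal (\<bar>f (a x) - f (b x)\<bar> powr p) \<partial>lebesgue)
         \<le> ennreal (K * \<epsilon> powr p) *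
           (orlicz_exp2_int \<epsilon> (\<lambda>x. a x - b x) + orlicz_exp2_int (1 / sqrt (4 * p * lam)) b)"
proof -
  obtain K where K: "K \<ge> 0"
    "\<And>\<epsilon> a b. 0 < \<epsilon> \<Longrightarrow> 4 * p * lam * \<epsilon>\<^sup>2 \<le> 1/2 \<Longrightarrow>
       \<bar>f a - f b\<bar> powr p
         \<le> K * \<epsilon> powr p * ((exp ((a - b)\<^sup>2 / \<epsilon>\<^sup>2) - 1) + (exp (4 * p * lam * b\<^sup>2) - 1))"
    using diff_powr_le_orlicz_kernels[OF p] by blast
  have "(\<integral>\<^sup>+x. ennreal (\<bar>f (a x) - f (b x)\<bar> powr p) \<partial>lebesgue)
      \<le> ennreal (K * \<epsilon> powr p) *
        (orlicz_exp2_int \<epsilon> (\<lambda>x. a x - b x) + orlicz_exp2_int (1 / sqrt (4 * p * lam)) b)"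
    if a: "a \<in> borel_measurable lebesgue" and b: "b \<in> borel_measurable lebesgue"
      and \<epsilon>: "0 < \<epsilon>" "4 * p * lam * \<epsilon>\<^sup>2 \<le> 1/2" for \<epsilon> and a b :: "'a \<Rightarrow> real"
  proof -
    define G where "G x = ennreal (exp (\<bar>a x - b x\<bar>\<^sup>2 / \<epsilon>\<^sup>2) - 1)" for x
    define H where "H x = ennreal (exp (\<bar>b x\<bar>\<^sup>2 / (1 / sqrt (4 * p * lam))\<^sup>2) - 1)" for x
    have H_eq: "H x = ennreal (exp (4 * p * lam * (b x)\<^sup>2) - 1)" for x
      using p lam_pos by (simp add: H_def power_divide mult.commute)
    have "(\<integral>\<^sup>+x. ennreal (\<bar>f (a x) - f (b x)\<bar> powr p) \<partial>lebesgue)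
        \<le> (\<integral>\<^sup>+x. ennreal (K * \<epsilon> powr p) * (G x + H x) \<partial>lebesgue)"
    proof (intro nn_integral_mono)
      fix x
      show "ennreal (\<bar>f (a x) - f (b x)\<bar> powr p) \<le> ennreal (K * \<epsilon> powr p) * (G x + H x)"
      proof -
        have "\<bar>f (a x) - f (b x)\<bar> powr p
            \<le> K * \<epsilon> powr p * ((exp (\<bar>a x - b x\<bar>\<^sup>2 / \<epsilon>\<^sup>2) - 1) + (exp (4 * p * lam * (b x)\<^sup>2) - 1))"
          using K(2)[OF \<epsilon>, of "a x" "b x"] by simp
        moreover have "ennreal (K * \<epsilon> powr p) * (G x + H x) = ennreal (K * \<epsilon> powr p *
            ((exp (\<bar>a x - b x\<bar>\<^sup>2 / \<epsilon>\<^sup>2) - 1) + (exp (4 * p * lam * (b x)\<^sup>2) - 1)))"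
          using K(1) p lam_pos unfolding G_def H_eq
          by (simp add: ennreal_mult' del: ennreal_plus) (simp add: ennreal_plus[symmetric])
        ultimately show ?thesis
          by (simp add: ennreal_leI)
      qed
    qed
    also have "\<dots> = ennreal (K * \<epsilon> powr p) * ((\<integral>\<^sup>+x. G x \<partial>lebesgue) + (\<integral>\<^sup>+x. H x \<partial>lebesgue))"
    proof -
      have "G \<in> borel_measurable lebesgue" "H \<in> borel_measurable lebesgue"
        unfolding G_def H_def using a b by measurable
      then show ?thesis
        by (simp add: nn_integral_cmult nn_integral_add)
    qed
    finally show ?thesis
      by (simp add: orlicz_exp2_int_def G_def H_def)
  qed
  with K(1) that show thesis
    by blast
qed

lemma compose_in_Lp_space:
  assumes f0: "f 0 = 0" and p: "2 \<le> p" and v: "v \<in> expL2_0"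
  shows "(\<lambda>x. f (v x)) \<in> Lp_space p"
proof -
  obtain K where "K \<ge> 0" and K: "\<And>\<epsilon> a b :: 'a::euclidean_space \<Rightarrow> real.
       a \<in> borel_measurable lebesgue \<Longrightarrow> b \<in> borel_measurable lebesgue \<Longrightarrow>
       0 < \<epsilon> \<Longrightarrow> 4 * p * lam * \<epsilon>\<^sup>2 \<le> 1/2 \<Longrightarrow>
       (\<integral>\<^sup>+x. ennreal (\<bar>f (a x) - f (b x)\<bar> powr p) \<partial>lebesgue)
         \<le> ennreal (K * \<epsilon> powr p) *
           (orlicz_exp2_int \<epsilon> (\<lambda>x. a x - b x) + orlicz_exp2_int (1 / sqrt (4 * p * lam)) b)"
    by (rule nn_integral_diff_powr_le[OF p]) (rule that)
  have v_meas: "v \<in> borel_measurable lebesgue" and v_fin: "\<And>\<alpha>. 0 < \<alpha> \<Longrightarrow> orlicz_exp2_int \<alpha> v < \<infinity>"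
    using v by (auto simp: expL2_0_def loc_integrable_def)
  define \<epsilon> where "\<epsilon> = 1 / sqrt (8 * p * lam)"
  have \<epsilon>: "0 < \<epsilon>" "4 * p * lam * \<epsilon>\<^sup>2 \<le> 1/2"
    using p lam_pos by (simp_all add: \<epsilon>_def power_divide)
  have "(\<integral>\<^sup>+x. ennreal (\<bar>f (v x)\<bar> powr p) \<partial>lebesgue) \<le> ennreal (K * \<epsilon> powr p) * orlicz_exp2_int \<epsilon> v"
    using K[OF v_meas _ \<epsilon>, of "\<lambda>_. 0"] f0 by (simp add: orlicz_exp2_int_def)
  also have "\<dots> < \<infinity>"
    using v_fin[OF \<epsilon>(1)] by (simp add: ennreal_mult_less_top)
  finally show ?thesis
    unfolding Lp_space_def
    using measurable_compose[OF v_meas borel_measurable_continuous_onI[OF continuous_on]] by simp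
qed

lemma Lp_norm_compose_diff_le:
  assumes p: "2 \<le> p" and w: "w \<in> expL2_0"
  obtains D \<epsilon>\<^sub>0 where "0 < \<epsilon>\<^sub>0"
    "\<And>v \<epsilon>. v \<in> expL2_0 \<Longrightarrow> 0 < \<epsilon> \<Longrightarrow> \<epsilon> \<le> \<epsilon>\<^sub>0 \<Longrightarrow> expL2_norm (\<lambda>x. v x - w x) < \<epsilon> \<Longrightarrow>
       Lp_norm p (\<lambda>x. f (v x) - f (w x)) \<le> D * \<epsilon>"
proof -
  obtain K where K: "K \<ge> 0" "\<And>\<epsilon> a b :: 'a::euclidean_space \<Rightarrow> real.
       a \<in> borel_measurable lebesgue \<Longrightarrow> b \<in> borel_measurable lebesgue \<Longrightarrow>
       0 < \<epsilon> \<Longrightarrow> 4 * p * lam * \<epsilon>\<^sup>2 \<le> 1/2 \<Longrightarrow>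
       (\<integral>\<^sup>+x. ennreal (\<bar>f (a x) - f (b x)\<bar> powr p) \<partial>lebesgue)
         \<le> ennreal (K * \<epsilon> powr p) *
           (orlicz_exp2_int \<epsilon> (\<lambda>x. a x - b x) + orlicz_exp2_int (1 / sqrt (4 * p * lam)) b)"
    by (rule nn_integral_diff_powr_le[OF p]) (rule that)
  have meas: "u \<in> borel_measurable lebesgue" and fin: "\<And>\<alpha>. 0 < \<alpha> \<Longrightarrow> orlicz_exp2_int \<alpha> u < \<infinity>"
    if "u \<in> expL2_0" for u :: "'a \<Rightarrow> real"
    using that by (auto simp: expL2_0_def loc_integrable_def)
  define M where "M = enn2real (orlicz_exp2_int (1 / sqrt (4 * p * lam)) w)"
  have M: "orlicz_exp2_int (1 / sqrt (4 * p * lam)) w = ennreal M" "0 \<le> M"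
    using fin[OF w, of "1 / sqrt (4 * p * lam)"] p lam_pos by (simp_all add: M_def ennreal_enn2real_if)
  define \<epsilon>\<^sub>0 where "\<epsilon>\<^sub>0 = 1 / sqrt (8 * p * lam)"
  have "Lp_norm p (\<lambda>x. f (v x) - f (w x)) \<le> (K * (1 + M)) powr (1 / p) * \<epsilon>"
    if v: "v \<in> expL2_0" and \<epsilon>: "0 < \<epsilon>" "\<epsilon> \<le> \<epsilon>\<^sub>0"
      and less: "expL2_norm (\<lambda>x. v x - w x) < \<epsilon>" for v \<epsilon>
  proof -
    have "\<epsilon>\<^sup>2 \<le> \<epsilon>\<^sub>0\<^sup>2"
      using \<epsilon> by (intro power_mono) auto
    then have small: "4 * p * lam * \<epsilon>\<^sup>2 \<le> 1/2"
      using p lam_pos by (simp add: \<epsilon>\<^sub>0_def power_divide field_simps)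
    have diff_meas: "(\<lambda>x. v x - w x) \<in> borel_measurable lebesgue"
      using meas[OF v] meas[OF w] by measurable
    have "orlicz_exp2_int 1 (\<lambda>x. v x - w x) < \<infinity>"
      using orlicz_exp2_int_diff_le[OF meas[OF v] meas[OF w], of 1] fin[OF v, of "1/2"] fin[OF w, of "1/2"]
      by (simp add: le_less_trans)
    then have "orlicz_exp2_int \<epsilon> (\<lambda>x. v x - w x) \<le> 1"
      by (rule orlicz_exp2_int_le_one_if_norm_less[OF diff_meas _ less])
    then have "(\<integral>\<^sup>+x. ennreal (\<bar>f (v x) - f (w x)\<bar> powr p) \<partial>lebesgue)
        \<le> ennreal (K * \<epsilon> powr p) * (1 + ennreal M)"
      using K(2)[OF meas[OF v] meas[OF w] \<epsilon>(1) small] M(1)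
      by (auto intro: order_trans[OF _ mult_left_mono[OF add_right_mono]])
    also have "\<dots> = ennreal (K * \<epsilon> powr p) * ennreal (1 + M)"
      using M(2) by simp
    also have "\<dots> = ennreal (K * \<epsilon> powr p * (1 + M))"
      using K(1) M(2) by (intro ennreal_mult[symmetric]) auto
    finally have "Lp_norm p (\<lambda>x. f (v x) - f (w x)) \<le> (K * \<epsilon> powr p * (1 + M)) powr (1 / p)"
      using K(1) M(2) p by (intro Lp_norm_le_if_nn_integral_le) auto
    also have "\<dots> = (K * (1 + M)) powr (1 / p) * \<epsilon>"
      using \<epsilon>(1) p by (simp add: powr_mult powr_powr mult_ac)
    finally show ?thesis .
  qed
  moreover have "0 < \<epsilon>\<^sub>0"
    using p lam_pos by (simp add: \<epsilon>\<^sub>0_def)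
  ultimately show thesis
    using that by blast
qed

lemma Lp_norm_compose_diff_tendsto:
  assumes p: "2 \<le> p" and w: "w \<in> expL2_0"
    and v: "eventually (\<lambda>s. v s \<in> expL2_0) F"
    and lim: "((\<lambda>s. expL2_norm (\<lambda>x. v s x - w x)) \<longlongrightarrow> 0) F"
  shows "((\<lambda>s. Lp_norm p (\<lambda>x. f (v s x) - f (w x))) \<longlongrightarrow> 0) F"
proof -
  obtain D \<epsilon>\<^sub>0 where "0 < \<epsilon>\<^sub>0" and D: "\<And>v \<epsilon>. v \<in> expL2_0 \<Longrightarrow> 0 < \<epsilon> \<Longrightarrow> \<epsilon> \<le> \<epsilon>\<^sub>0 \<Longrightarrow>
      expL2_norm (\<lambda>x. v x - w x) < \<epsilon> \<Longrightarrow> Lp_norm p (\<lambda>x. f (v x) - f (w x)) \<le> D * \<epsilon>"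
    by (rule Lp_norm_compose_diff_le[OF p w]) (rule that)
  show ?thesis
  proof (rule tendsto_zero_if_eventually_le_scaled[OF \<open>0 < \<epsilon>\<^sub>0\<close>])
    fix \<epsilon> :: real
    assume \<epsilon>: "0 < \<epsilon>" "\<epsilon> \<le> \<epsilon>\<^sub>0"
    from v order_tendstoD(2)[OF lim \<epsilon>(1)]
    show "eventually (\<lambda>s. \<bar>Lp_norm p (\<lambda>x. f (v s x) - f (w x))\<bar> \<le> D * \<epsilon>) F"
    proof eventually_elim
      case (elim s)
      have "0 \<le> Lp_norm p (\<lambda>x. f (v s x) - f (w x))"
        by (simp add: Lp_norm_def)
      with D[OF elim(1) \<epsilon> elim(2)] show ?case
        by simp
    qed
  qed
qed

end

theorem proposition2p6:
  fixes f :: "real \<Rightarrow> real" and C lam T :: real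
    and u :: "real \<Rightarrow> 'a::euclidean_space \<Rightarrow> real"
  assumes "f 0 = 0"
    and "C > 0" and "lam > 0"
    and "\<And>v w. \<bar>f v - f w\<bar> \<le> C * \<bar>v - w\<bar> * (exp (lam * v^2) + exp (lam * w^2))"
    and "T > 0"
    and "cont_expL2_0 T u"
  shows "\<forall>p. 2 \<le> p \<longrightarrow> cont_Lp p T (\<lambda>t x. f (u t x))"
proof (intro allI impI)
  fix p :: real
  assume p: "2 \<le> p"
  interpret exp_sq_lipschitz f C lam
    using assms(2,3) by unfold_locales (auto intro: assms(4))
  have u_mem: "u t \<in> expL2_0"
    and u_cont: "((\<lambda>s. expL2_norm (\<lambda>x. u s x - u t x)) \<longlongrightarrow> 0) (at t within {0..T})"
    if "t \<in> {0..T}" for t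
    using assms(6) that unfolding cont_expL2_0_def by auto
  have "eventually (\<lambda>s. u s \<in> expL2_0) (at t within {0..T})" for t
    using u_mem by (auto simp: eventually_at_filter)
  then show "cont_Lp p T (\<lambda>t x. f (u t x))"
    unfolding cont_Lp_def
    using compose_in_Lp_space[OF assms(1) p u_mem]
      Lp_norm_compose_diff_tendsto[OF p u_mem _ u_cont]
    by blast
qed

end
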